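(* Let $K:\mathbb{R}\to\mathbb{R}$ be defined by $K(t)=\sin(\exp(\exp(1/|t|)))$ for $0<|t|\le1$, $K(t)=0$ for $|t|>1$ (and any fixed value at $t=0$). Let $A=[0,1]$ and $\mathcal F(A)=\{K(x-\cdot):x\in A\}$. Then $\mathcal F(A)$ is not a VC class: there do not exist constants $C>0$, $b>0$ such that $\sup_{\mathcal P}N_{cov}(\epsilon,\mathcal F(A),d_{L^2(\mathcal P)})\le C\epsilon^{-b}$ for all $0<\epsilon<1$.
   Context: For a Borel probability measure $\mathcal P$ on $\mathbb{R}$, $d_{L^2(\mathcal P)}(K(x-\cdot),K(y-\cdot))=\big(\int(K(x-z)-K(y-z))^2d\mathcal P(z)\big)^{1/2}$. $N_{cov}(\epsilon,\mathcal F(A),d_{L^2(\mathcal P)})$ is the minimal number of $d_{L^2(\mathcal P)}$-balls of radius $\epsilon$ needed to cover $\mathcal F(A)$; the supremum is over all Borel probability measures on $\mathbb{R}$. *)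

theory Defs
  imports "HOL-Probability.Probability"
begin

definition Kker :: "real \<Rightarrow> real \<Rightarrow> real" where
  "Kker c t = (if t = 0 then c
               else if \<bar>t\<bar> \<le> 1 then sin (exp (exp (1 / \<bar>t\<bar>))) else 0)"

text \<open>Closed L2(P)-ball membership: d_{L2(P)}(f,g) \<le> eps, i.e. the integral of (f-g)^2 is at most eps^2.
  The nonnegative integral is used, so non-square-integrable differences have infinite distance.\<close>
definition L2_close :: "real measure \<Rightarrow> real \<Rightarrow> (real \<Rightarrow> real) \<Rightarrow> (real \<Rightarrow> real) \<Rightarrow> bool" where
  "L2_close P eps f g \<longleftrightarrow> (\<integral>\<^sup>+ z. ennreal ((f z - g z)^2) \<partial>P) \<le> ennreal (eps^2)"

text \<open>Covering number: minimal number of L2(P)-balls of radius eps (with Borel measurable centers)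
  covering F; equals \<infinity> if no finite cover exists.\<close>
definition N_cov :: "real \<Rightarrow> (real \<Rightarrow> real) set \<Rightarrow> real measure \<Rightarrow> ereal" where
  "N_cov eps F P = Inf {ereal (real (card G)) | G. finite G \<and> G \<subseteq> borel_measurable borel \<and>
                          (\<forall>f\<in>F. \<exists>g\<in>G. L2_close P eps f g)}"

definition borel_prob_measures :: "real measure set" where
  "borel_prob_measures = {P. prob_space P \<and> sets P = sets borel}"

end

(* The phase exp (exp (1/t)) of the kernel grows so fast as t \<rightarrow> 0 that the class shatters any
   number m of points at the levels \<plusminus>1/2: for every sign pattern S there is a shift x with
   K (x - z\<^sub>j) \<ge> 1/2 for j \<in> S and \<le> -1/2 otherwise. Under the uniform distribution on these m
   points the 2^m resulting functions are pairwise at L2-distance at least 1/\<surd>m, so at scale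
   \<epsilon> = 1/(3\<surd>m) they need 2^m covering balls, which eventually exceeds C (3\<surd>m)^b. *)
theory Submission
  imports Defs "HOL-Real_Asymp.Real_Asymp"
begin

definition phase :: "real \<Rightarrow> real" where
  "phase t = exp (exp (1 / t))"

text \<open>An upper bound for \<open>\<bar>phase'\<bar>\<close> on \<open>[p, \<infinity>)\<close>.\<close>
definition phase_slope :: "real \<Rightarrow> real" where
  "phase_slope p = exp (exp (1 / p) + 3 / p)"

lemma phase_pos: "0 < phase t"
  by (simp add: phase_def)

lemma phase_slope_pos: "0 < phase_slope p"
  by (simp add: phase_slope_def)

lemma phase_has_real_derivative:
  "t \<noteq> 0 \<Longrightarrow> (phase has_real_derivative - (phase t * exp (1 / t) / t\<^sup>2)) (at t)"
  unfolding phase_def by (auto intro!: derivative_eq_intros simp: power2_eq_square field_simps)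

lemma phase_antimono: "0 < p \<Longrightarrow> p \<le> q \<Longrightarrow> phase q \<le> phase p"
  by (simp add: phase_def frac_le)

lemma phase_slope_antimono: "0 < p \<Longrightarrow> p \<le> q \<Longrightarrow> phase_slope q \<le> phase_slope p"
  unfolding phase_slope_def by (auto intro!: add_mono simp: frac_le)

lemma continuous_on_phase: "(\<And>t. t \<in> S \<Longrightarrow> 0 < t) \<Longrightarrow> continuous_on S phase"
  unfolding phase_def by (intro continuous_intros) auto

lemma phase_deriv_le_slope:
  assumes "0 < t"
  shows "phase t * exp (1 / t) / t\<^sup>2 \<le> phase_slope t"
proof -
  have "1 / t \<le> exp (1 / t)"
    using exp_ge_add_one_self[of "1 / t"] by linarith
  then have "(1 / t)\<^sup>2 \<le> (exp (1 / t))\<^sup>2"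
    using assms by (intro power_mono) auto
  then have "1 / t\<^sup>2 \<le> exp (2 / t)"
    by (simp add: power_divide flip: exp_of_nat_mult)
  then have "phase t * exp (1 / t) * (1 / t\<^sup>2) \<le> phase t * exp (1 / t) * exp (2 / t)"
    by (intro mult_left_mono) (auto simp: phase_def)
  also have "\<dots> = phase_slope t"
    by (simp add: phase_def phase_slope_def flip: exp_add)
  finally show ?thesis by simp
qed

lemma phase_le_deriv:
  assumes "0 < t" "t \<le> 1"
  shows "phase t \<le> phase t * exp (1 / t) / t\<^sup>2"
proof -
  have "t\<^sup>2 \<le> 1" using assms by (intro power_le_one) auto
  also have "1 \<le> exp (1 / t)" using assms by simp
  finally have "1 \<le> exp (1 / t) / t\<^sup>2" using assms by simp
  then have "phase t * 1 \<le> phase t * (exp (1 / t) / t\<^sup>2)"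
    using phase_pos less_imp_le by (intro mult_left_mono) auto
  then show ?thesis by simp
qed

lemma phase_drop_bounds:
  assumes "0 < p" "p \<le> q" "q \<le> 1"
  shows "(q - p) * phase q \<le> phase p - phase q" "phase p - phase q \<le> (q - p) * phase_slope p"
proof -
  have "\<exists>\<xi>. p \<le> \<xi> \<and> \<xi> \<le> q \<and> phase p - phase q = (q - p) * (phase \<xi> * exp (1 / \<xi>) / \<xi>\<^sup>2)"
  proof (cases "p = q")
    case False
    then obtain \<xi> where "p < \<xi>" "\<xi> < q"
      "phase q - phase p = (q - p) * - (phase \<xi> * exp (1 / \<xi>) / \<xi>\<^sup>2)"
      using MVT2[of p q phase "\<lambda>t. - (phase t * exp (1 / t) / t\<^sup>2)"] assms phase_has_real_derivative
      by force
    then show ?thesis by (intro exI[of _ \<xi>]) auto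
  qed auto
  then obtain \<xi> where \<xi>: "p \<le> \<xi>" "\<xi> \<le> q"
    and drop: "phase p - phase q = (q - p) * (phase \<xi> * exp (1 / \<xi>) / \<xi>\<^sup>2)" by blast
  have "phase q \<le> phase \<xi> * exp (1 / \<xi>) / \<xi>\<^sup>2"
    using phase_antimono[of \<xi> q] phase_le_deriv[of \<xi>] \<xi> assms by linarith
  then show "(q - p) * phase q \<le> phase p - phase q"
    unfolding drop using assms by (intro mult_left_mono) auto
  have "phase \<xi> * exp (1 / \<xi>) / \<xi>\<^sup>2 \<le> phase_slope p"
    using phase_deriv_le_slope[of \<xi>] phase_slope_antimono[of p \<xi>] \<xi> assms by linarith
  then show "phase p - phase q \<le> (q - p) * phase_slope p"
    unfolding drop using assms by (intro mult_left_mono) auto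
qed

lemma phase_growth:
  assumes "0 < p" "p \<le> 1" "0 < q" "q \<le> p / 4"
  shows "6 * phase_slope p \<le> phase q"
proof -
  define u where "u = 1 / p"
  define A where "A = exp u"
  have "1 \<le> u" using assms by (simp add: u_def)
  moreover have "1 + u \<le> A" unfolding A_def by (rule exp_ge_add_one_self)
  ultimately have "2 \<le> A" "u \<le> A" by linarith+
  then have "(2::real) ^ 3 * A \<le> A ^ 3 * A"
    by (intro mult_right_mono power_mono) auto
  then have "8 * A \<le> A ^ 4"
    by (simp add: power_numeral_reduce mult_ac)
  then have "3 + A + 3 * u \<le> A ^ 4"
    using \<open>2 \<le> A\<close> \<open>u \<le> A\<close> by linarith
  also have "A ^ 4 = exp (4 * u)"
    by (simp add: A_def flip: exp_of_nat_mult)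
  also have "4 * u \<le> 1 / q"
    using assms by (simp add: u_def field_simps)
  finally have exponent: "3 + exp (1 / p) + 3 / p \<le> exp (1 / q)"
    by (simp add: A_def u_def)
  have "(2::real) ^ 3 \<le> exp 1 ^ 3"
    using exp_ge_add_one_self[of "1::real"] by (intro power_mono) auto
  then have "6 \<le> exp (3::real)"
    by (simp flip: exp_of_nat_mult)
  then have "6 * phase_slope p \<le> exp 3 * phase_slope p"
    using phase_slope_pos by (intro mult_right_mono) (auto simp: less_imp_le)
  also have "\<dots> = exp (3 + exp (1 / p) + 3 / p)"
    by (simp add: phase_slope_def add.assoc flip: exp_add)
  also have "\<dots> \<le> phase q"
    using exponent by (simp add: phase_def)
  finally show ?thesis .
qed

lemma window_length_le_square:
  assumes "0 < \<delta>"
  shows "(2 * pi / 3) / phase_slope \<delta> \<le> \<delta>\<^sup>2"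
proof -
  have "0 \<le> 3 / \<delta>" using assms by simp
  then have "(3 / \<delta>)\<^sup>2 / 2 \<le> exp (3 / \<delta>)"
    using exp_lower_Taylor_quadratic[of "3 / \<delta>"] by linarith
  also have "exp (3 / \<delta>) \<le> phase_slope \<delta>"
    by (simp add: phase_slope_def)
  finally have "9 / (2 * \<delta>\<^sup>2) \<le> phase_slope \<delta>"
    by (simp add: power_divide)
  then have "(2 * pi / 3) / phase_slope \<delta> \<le> (2 * pi / 3) / (9 / (2 * \<delta>\<^sup>2))"
    using assms phase_slope_pos by (intro divide_left_mono) auto
  also have "\<dots> = 4 * pi / 27 * \<delta>\<^sup>2"
    by (simp add: field_simps)
  also have "\<dots> \<le> \<delta>\<^sup>2"
    using pi_less_4 by (intro mult_left_le_one_le) auto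
  finally show ?thesis .
qed

lemma sin_ge_half: "pi / 6 \<le> y \<Longrightarrow> y \<le> 5 * pi / 6 \<Longrightarrow> 1 / 2 \<le> sin y"
proof -
  assume y: "pi / 6 \<le> y" "y \<le> 5 * pi / 6"
  show ?thesis
  proof (cases "y \<le> pi / 2")
    case True
    then show ?thesis
      using sin_monotone_2pi_le[of "pi / 6" y] y sin_30 by (simp add: field_simps)
  next
    case False
    have "sin (pi / 6) \<le> sin (pi - y)"
      using False y by (intro sin_monotone_2pi_le) (auto simp: field_simps)
    then show ?thesis using sin_30 by simp
  qed
qed

lemma sin_le_neg_half: "7 * pi / 6 \<le> y \<Longrightarrow> y \<le> 11 * pi / 6 \<Longrightarrow> sin y \<le> - 1 / 2"
  using sin_ge_half[of "y - pi"] sin_periodic_pi[of "y - pi"] by (simp add: field_simps)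

lemma sin_minus_2pi_int: "sin (y - 2 * pi * of_int k) = sin y"
  by (simp add: sin_diff)

lemma antitone_crosses_window:
  fixes \<phi> :: "real \<Rightarrow> real"
  assumes "a \<le> b" and cont: "continuous_on {a..b} \<phi>"
    and mono: "\<And>x y. a \<le> x \<Longrightarrow> x \<le> y \<Longrightarrow> y \<le> b \<Longrightarrow> \<phi> y \<le> \<phi> x"
    and slope: "\<And>x y. a \<le> x \<Longrightarrow> x \<le> y \<Longrightarrow> y \<le> b \<Longrightarrow> \<phi> x - \<phi> y \<le> B * (y - x)"
    and drop: "\<phi> b + 4 * pi \<le> \<phi> a"
    and window: "0 \<le> \<alpha>" "0 < w" "\<alpha> + w \<le> 2 * pi"
  shows "\<exists>a' k. a \<le> a' \<and> a' + w / B \<le> b \<and>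
           (\<forall>x\<in>{a'..a' + w / B}. \<alpha> \<le> \<phi> x - 2 * pi * of_int k \<and> \<phi> x - 2 * pi * of_int k \<le> \<alpha> + w)"
proof -
  define k where "k = \<lceil>\<phi> b / (2 * pi)\<rceil>"
  define \<theta> where "\<theta> = 2 * pi * of_int k"
  have "\<phi> b / (2 * pi) \<le> of_int k" "of_int k \<le> \<phi> b / (2 * pi) + 1"
    unfolding k_def by (rule le_of_int_ceiling, rule of_int_ceiling_le_add_one)
  then have \<theta>: "\<phi> b \<le> \<theta>" "\<theta> \<le> \<phi> b + 2 * pi"
    unfolding \<theta>_def by (simp_all add: field_simps)
  obtain x1 where x1: "a \<le> x1" "x1 \<le> b" "\<phi> x1 = \<theta> + \<alpha> + w"
    using IVT2'[of \<phi> b "\<theta> + \<alpha> + w" a] \<theta> window drop \<open>a \<le> b\<close> cont by auto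
  obtain x2 where x2: "a \<le> x2" "x2 \<le> b" "\<phi> x2 = \<theta> + \<alpha>"
    using IVT2'[of \<phi> b "\<theta> + \<alpha>" a] \<theta> window drop \<open>a \<le> b\<close> cont by auto
  have "x1 < x2"
    using mono[of x2 x1] x1 x2 \<open>0 < w\<close> by force
  then have "w \<le> B * (x2 - x1)"
    using slope[of x1 x2] x1 x2 by simp
  moreover from this have "0 < B * (x2 - x1)"
    using \<open>0 < w\<close> by linarith
  then have "0 < B"
    using \<open>x1 < x2\<close> by (simp add: zero_less_mult_iff)
  ultimately have len: "w / B \<le> x2 - x1"
    by (simp add: pos_divide_le_eq mult.commute)
  have "\<alpha> \<le> \<phi> x - \<theta> \<and> \<phi> x - \<theta> \<le> \<alpha> + w" if "x \<in> {x1..x1 + w / B}" for x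
    using mono[of x1 x] mono[of x x2] that x1 x2 len by auto
  then show ?thesis
    using x1 x2 len unfolding \<theta>_def by (intro exI[of _ x1] exI[of _ k]) auto
qed

lemma sin_phase_sign_on_subinterval:
  assumes "0 < d" "0 \<le> a" "a + l + d \<le> 1" "4 * pi \<le> l * phase (a + l + d)"
  shows "\<exists>a'. a \<le> a' \<and> a' + (2 * pi / 3) / phase_slope d \<le> a + l \<and>
           (\<forall>x\<in>{a'..a' + (2 * pi / 3) / phase_slope d}.
              if up then 1 / 2 \<le> sin (phase (x + d)) else sin (phase (x + d)) \<le> - 1 / 2)"
proof -
  define \<alpha> where "\<alpha> = (if up then pi / 6 else 7 * pi / 6)"
  have "0 < l * phase (a + l + d)"
    using assms(4) pi_gt_zero by linarith
  then have "0 \<le> l"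
    using phase_pos[of "a + l + d"] by (simp add: zero_less_mult_iff)
  have "l * phase (a + l + d) \<le> phase (a + d) - phase (a + l + d)"
    using phase_drop_bounds(1)[of "a + d" "a + l + d"] assms \<open>0 \<le> l\<close> by simp
  then have drop: "phase (a + l + d) + 4 * pi \<le> phase (a + d)"
    using assms(4) by linarith
  have "\<exists>a' k. a \<le> a' \<and> a' + (2 * pi / 3) / phase_slope d \<le> a + l \<and>
          (\<forall>x\<in>{a'..a' + (2 * pi / 3) / phase_slope d}.
             \<alpha> \<le> phase (x + d) - 2 * pi * of_int k \<and> phase (x + d) - 2 * pi * of_int k \<le> \<alpha> + 2 * pi / 3)"
  proof (rule antitone_crosses_window)
    show "continuous_on {a..a + l} (\<lambda>x. phase (x + d))"
      using assms by (intro continuous_on_compose2[OF continuous_on_phase[of "{0<..}"]]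
          continuous_intros) auto
    fix x y assume xy: "a \<le> x" "x \<le> y" "y \<le> a + l"
    then show "phase (y + d) \<le> phase (x + d)"
      using assms by (intro phase_antimono) auto
    have "phase (x + d) - phase (y + d) \<le> (y - x) * phase_slope (x + d)"
      using phase_drop_bounds(2)[of "x + d" "y + d"] xy assms by simp
    also have "\<dots> \<le> (y - x) * phase_slope d"
      using xy assms by (intro mult_left_mono phase_slope_antimono) auto
    finally show "phase (x + d) - phase (y + d) \<le> phase_slope d * (y - x)"
      by (simp add: mult.commute)
  qed (use drop \<open>0 \<le> l\<close> in \<open>auto simp: \<alpha>_def add.assoc\<close>)
  then obtain a' k where "a \<le> a'" "a' + (2 * pi / 3) / phase_slope d \<le> a + l"
    and window: "\<And>x. x \<in> {a'..a' + (2 * pi / 3) / phase_slope d} \<Longrightarrow>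
        \<alpha> \<le> phase (x + d) - 2 * pi * of_int k \<and> phase (x + d) - 2 * pi * of_int k \<le> \<alpha> + 2 * pi / 3"
    by blast
  moreover have "if up then 1 / 2 \<le> sin (phase (x + d)) else sin (phase (x + d)) \<le> - 1 / 2"
    if "x \<in> {a'..a' + (2 * pi / 3) / phase_slope d}" for x
  proof -
    define y where "y = phase (x + d) - 2 * pi * of_int k"
    have "\<alpha> \<le> y" "y \<le> \<alpha> + 2 * pi / 3" "sin (phase (x + d)) = sin y"
      using window[OF that] sin_minus_2pi_int[of "phase (x + d)" k] by (simp_all add: y_def)
    then show ?thesis
      using sin_ge_half[of y] sin_le_neg_half[of y] by (auto simp: \<alpha>_def)
  qed
  ultimately show ?thesis by blast
qed

lemma sin_phase_sign_refine:
  assumes "0 < q" "q \<le> p / 8" "p \<le> 1" "0 \<le> a" "a + (2 * pi / 3) / phase_slope p \<le> L" "L \<le> q"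
  shows "\<exists>a'. a \<le> a' \<and> a' + (2 * pi / 3) / phase_slope q \<le> a + (2 * pi / 3) / phase_slope p \<and>
           (\<forall>x\<in>{a'..a' + (2 * pi / 3) / phase_slope q}.
              if up then 1 / 2 \<le> sin (phase (x + q)) else sin (phase (x + q)) \<le> - 1 / 2)"
proof (rule sin_phase_sign_on_subinterval)
  define l where "l = (2 * pi / 3) / phase_slope p"
  have "0 < l"
    using phase_slope_pos by (simp add: l_def)
  have "a + l \<le> L"
    using assms(5) by (simp only: l_def)
  then show "a + (2 * pi / 3) / phase_slope p + q \<le> 1"
    using assms unfolding l_def by linarith
  have "6 * phase_slope p \<le> phase (L + q)"
    using assms \<open>0 < l\<close> \<open>a + l \<le> L\<close> by (intro phase_growth) auto
  also have "\<dots> \<le> phase (a + l + q)"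
    using assms \<open>0 < l\<close> \<open>a + l \<le> L\<close> by (intro phase_antimono) auto
  finally have "l * (6 * phase_slope p) \<le> l * phase (a + l + q)"
    using \<open>0 < l\<close> by (intro mult_left_mono) auto
  moreover have "l * (6 * phase_slope p) = 4 * pi"
    using phase_slope_pos[of p] by (simp add: l_def)
  ultimately show "4 * pi \<le> (2 * pi / 3) / phase_slope p * phase (a + (2 * pi / 3) / phase_slope p + q)"
    by (simp add: l_def)
qed (use assms in auto)

lemma nested_intervals:
  fixes l :: "nat \<Rightarrow> real"
  assumes "0 \<le> l m"
    and step: "\<And>n a. n < m \<Longrightarrow> {a..a + l n} \<subseteq> {a0..a0 + l 0} \<Longrightarrow>
                 \<exists>a'. a \<le> a' \<and> a' + l (Suc n) \<le> a + l n \<and> (\<forall>x\<in>{a'..a' + l (Suc n)}. Q n x)"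
  shows "\<exists>x\<in>{a0..a0 + l 0}. \<forall>j<m. Q j x"
proof -
  have "\<exists>a. {a..a + l n} \<subseteq> {a0..a0 + l 0} \<and> (\<forall>x\<in>{a..a + l n}. \<forall>j<n. Q j x)" if "n \<le> m" for n
    using that
  proof (induction n)
    case 0
    show ?case by blast
  next
    case (Suc n)
    then obtain a where a: "{a..a + l n} \<subseteq> {a0..a0 + l 0}" "\<forall>x\<in>{a..a + l n}. \<forall>j<n. Q j x"
      by auto
    obtain a' where a': "a \<le> a'" "a' + l (Suc n) \<le> a + l n" "\<forall>x\<in>{a'..a' + l (Suc n)}. Q n x"
      using step[OF _ a(1)] Suc.prems by auto
    then have "{a'..a' + l (Suc n)} \<subseteq> {a..a + l n}" by auto
    then show ?case
      using a a'(3) by (intro exI[of _ a']) (auto simp: less_Suc_eq)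
  qed
  then obtain a where "{a..a + l m} \<subseteq> {a0..a0 + l 0}" "\<forall>x\<in>{a..a + l m}. \<forall>j<m. Q j x"
    by blast
  then show ?thesis
    using assms(1) by (intro bexI[of _ a]) auto
qed

text \<open>Nested intervals of shifts: the points \<open>p (j + 1)\<close> approach \<open>0\<close> so quickly that on a
  subinterval fixing the sign at one point the phase at the next one still runs through \<open>4\<pi>\<close>
  (by \<open>phase_growth\<close>).\<close>
lemma sin_phase_shatters:
  "\<exists>(q :: nat \<Rightarrow> real) L. L \<le> 1 \<and> (\<forall>j<m. 0 < q j \<and> L + q j \<le> 1) \<and>
     (\<forall>S. \<exists>x\<in>{0..L}. \<forall>j<m. if j \<in> S then 1 / 2 \<le> sin (phase (x + q j)) else sin (phase (x + q j)) \<le> - 1 / 2)"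
proof -
  define p :: "nat \<Rightarrow> real" where "p n = 1 / 8 ^ (m + n)" for n
  define l where "l n = (2 * pi / 3) / phase_slope (p n)" for n
  have p_pos: "0 < p n" and p_le: "p n \<le> 1" and p_Suc: "p (Suc n) = p n / 8" for n
    by (simp_all add: p_def)
  have l_pos: "0 < l n" for n
    using phase_slope_pos by (simp add: l_def)
  have l0_le_sq: "l 0 \<le> (p 0)\<^sup>2"
    unfolding l_def by (rule window_length_le_square[OF p_pos])
  have l0_le: "l 0 \<le> p (Suc j)" if "j < m" for j
  proof -
    note l0_le_sq
    also have "\<dots> = p m"
      by (simp add: p_def power2_eq_square power_add)
    also have "\<dots> \<le> p (Suc j)"
      unfolding p_def using that by (intro divide_left_mono power_increasing) auto
    finally show ?thesis .
  qed
  have "\<exists>x\<in>{0..0 + l 0}. \<forall>j<m. if j \<in> S then 1 / 2 \<le> sin (phase (x + p (Suc j)))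
                                 else sin (phase (x + p (Suc j))) \<le> - 1 / 2" for S
  proof (rule nested_intervals)
    fix n a assume "n < m" and "{a..a + l n} \<subseteq> {0..0 + l 0}"
    then have "0 \<le> a" "a + l n \<le> l 0"
      using l_pos[of n] by auto
    moreover have "p (Suc n) \<le> p n / 8"
      by (simp add: p_Suc)
    ultimately show "\<exists>a'. a \<le> a' \<and> a' + l (Suc n) \<le> a + l n \<and> (\<forall>x\<in>{a'..a' + l (Suc n)}.
        if n \<in> S then 1 / 2 \<le> sin (phase (x + p (Suc n))) else sin (phase (x + p (Suc n))) \<le> - 1 / 2)"
      using sin_phase_sign_refine[where q = "p (Suc n)" and up = "n \<in> S"] p_pos p_le l0_le[OF \<open>n < m\<close>]
      unfolding l_def by blast
  qed (use l_pos less_imp_le in auto)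
  moreover have "l 0 + p (Suc j) \<le> 1" if "j < m" for j
    using l0_le[OF that] p_le[of j] by (simp add: p_Suc)
  moreover have "l 0 \<le> 1"
    using l0_le_sq p_le[of 0] p_pos[of 0] power_le_one[of "p 0" 2] by simp
  ultimately show ?thesis
    using p_pos by (intro exI[of _ "\<lambda>j. p (Suc j)"] exI[of _ "l 0"]) auto
qed

lemma Kker_eq_sin_phase: "0 < t \<Longrightarrow> t \<le> 1 \<Longrightarrow> Kker c t = sin (phase t)"
  by (simp add: Kker_def phase_def)

lemma Kker_shatters:
  "\<exists>z :: nat \<Rightarrow> real. \<forall>S. \<exists>x\<in>{0..1}. \<forall>j<m.
     if j \<in> S then 1 / 2 \<le> Kker c (x - z j) else Kker c (x - z j) \<le> - 1 / 2"
proof -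
  obtain q L where "L \<le> 1" and q: "\<And>j. j < m \<Longrightarrow> 0 < q j \<and> L + q j \<le> 1"
    and shatters: "\<And>S. \<exists>x\<in>{0..L}. \<forall>j<m.
      if j \<in> S then 1 / 2 \<le> sin (phase (x + q j)) else sin (phase (x + q j)) \<le> - 1 / 2"
    using sin_phase_shatters by metis
  have "Kker c (x - - q j) = sin (phase (x + q j))" if "x \<in> {0..L}" "j < m" for x j
    using q[OF that(2)] that(1) unfolding diff_minus_eq_add by (intro Kker_eq_sin_phase) auto
  moreover have "{0..L} \<subseteq> {0..1}"
    using \<open>L \<le> 1\<close> by auto
  ultimately show ?thesis
    using shatters by (intro exI[of _ "\<lambda>j. - q j"]) (metis subsetD)
qed

lemma L2_close_triangle:
  assumes "f \<in> borel_measurable P" "g \<in> borel_measurable P" "h \<in> borel_measurable P"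
    and "L2_close P e f g" "L2_close P e h g"
  shows "L2_close P (2 * e) f h"
proof -
  have pointwise: "ennreal ((f z - h z)\<^sup>2) \<le> 2 * ennreal ((f z - g z)\<^sup>2) + 2 * ennreal ((h z - g z)\<^sup>2)"
    for z
  proof -
    have "(f z - h z)\<^sup>2 \<le> 2 * (f z - g z)\<^sup>2 + 2 * (h z - g z)\<^sup>2"
      using zero_le_power2[of "f z + h z - 2 * g z"] by (simp add: power2_eq_square algebra_simps)
    then have "ennreal ((f z - h z)\<^sup>2) \<le> ennreal (2 * (f z - g z)\<^sup>2) + ennreal (2 * (h z - g z)\<^sup>2)"
      by (simp add: ennreal_leI flip: ennreal_plus)
    then show ?thesis
      by (simp add: ennreal_mult)
  qed
  have "(\<integral>\<^sup>+ z. ennreal ((f z - h z)\<^sup>2) \<partial>P)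
      \<le> (\<integral>\<^sup>+ z. 2 * ennreal ((f z - g z)\<^sup>2) + 2 * ennreal ((h z - g z)\<^sup>2) \<partial>P)"
    by (intro nn_integral_mono pointwise)
  also have "\<dots> = 2 * (\<integral>\<^sup>+ z. ennreal ((f z - g z)\<^sup>2) \<partial>P) + 2 * (\<integral>\<^sup>+ z. ennreal ((h z - g z)\<^sup>2) \<partial>P)"
    using assms(1-3) by (simp add: nn_integral_add nn_integral_cmult)
  also have "\<dots> \<le> 2 * ennreal (e\<^sup>2) + 2 * ennreal (e\<^sup>2)"
    using assms(4,5) unfolding L2_close_def by (intro add_mono mult_left_mono) auto
  also have "\<dots> = (2 + 2) * ennreal (e\<^sup>2)"
    by (simp only: distrib_right)
  also have "\<dots> = ennreal ((2 * e)\<^sup>2)"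
    by (simp add: power_mult_distrib ennreal_mult)
  finally show ?thesis
    unfolding L2_close_def .
qed

text \<open>A packing bound: points pairwise more than \<open>2\<epsilon>\<close> apart need distinct \<open>\<epsilon>\<close>-balls.\<close>
lemma N_cov_ge_card_of_separated:
  assumes P: "sets P = sets borel"
    and F: "f ` I \<subseteq> F" "\<And>i. i \<in> I \<Longrightarrow> f i \<in> borel_measurable borel"
    and separated: "\<And>i j. i \<in> I \<Longrightarrow> j \<in> I \<Longrightarrow> i \<noteq> j \<Longrightarrow> \<not> L2_close P (2 * eps) (f i) (f j)"
  shows "ereal (card I) \<le> N_cov eps F P"
  unfolding N_cov_def
proof (rule Inf_greatest, clarify)
  fix G assume G: "finite G" "G \<subseteq> borel_measurable borel"
    and cover: "\<forall>f\<in>F. \<exists>g\<in>G. L2_close P eps f g"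
  have "\<forall>i\<in>I. \<exists>g. g \<in> G \<and> L2_close P eps (f i) g"
    using cover F(1) by blast
  then obtain g where g: "\<And>i. i \<in> I \<Longrightarrow> g i \<in> G" "\<And>i. i \<in> I \<Longrightarrow> L2_close P eps (f i) (g i)"
    by metis
  have meas: "borel_measurable borel = borel_measurable P"
    using measurable_cong_sets[OF P refl] by metis
  have "inj_on g I"
  proof (rule inj_onI, rule ccontr)
    fix i j assume ij: "i \<in> I" "j \<in> I" "g i = g j" "i \<noteq> j"
    have "f i \<in> borel_measurable P" "g i \<in> borel_measurable P" "f j \<in> borel_measurable P"
      using F(2) G(2) g(1) ij(1,2) meas by auto
    moreover have "L2_close P eps (f i) (g i)" "L2_close P eps (f j) (g i)"
      using g(2) ij by metis+
    ultimately have "L2_close P (2 * eps) (f i) (f j)"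
      by (rule L2_close_triangle)
    then show False
      using separated[OF ij(1,2,4)] by contradiction
  qed
  then have "card I \<le> card G"
    using card_inj_on_le[of g I G] g(1) G(1) by blast
  then show "ereal (real (card I)) \<le> ereal (real (card G))"
    by simp
qed

definition uniform_points :: "nat \<Rightarrow> (nat \<Rightarrow> real) \<Rightarrow> real measure" where
  "uniform_points m z = distr (measure_pmf (pmf_of_set {..<m})) borel z"

lemma uniform_points_in_borel_prob_measures:
  "0 < m \<Longrightarrow> uniform_points m z \<in> borel_prob_measures"
  unfolding borel_prob_measures_def uniform_points_def
  by (auto intro!: measure_pmf.prob_space_distr)

lemma nn_integral_uniform_points:
  assumes "0 < m" "h \<in> borel_measurable borel"
  shows "(\<integral>\<^sup>+ x. h x \<partial>uniform_points m z) = (\<Sum>j<m. h (z j)) / of_nat m"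
  using assms unfolding uniform_points_def
  by (simp add: nn_integral_distr) (subst nn_integral_pmf_of_set; auto)

lemma not_L2_close_uniform_points:
  assumes "0 < m" "4 * real m * eps\<^sup>2 < 1"
    and "f \<in> borel_measurable borel" "g \<in> borel_measurable borel"
    and "j < m" "1 \<le> \<bar>f (z j) - g (z j)\<bar>"
  shows "\<not> L2_close (uniform_points m z) (2 * eps) f g"
proof
  have "ennreal 1 \<le> ennreal ((f (z j) - g (z j))\<^sup>2)"
    using assms(6) by (intro ennreal_leI) (metis one_le_power power2_abs)
  also have "\<dots> \<le> (\<Sum>i<m. ennreal ((f (z i) - g (z i))\<^sup>2))"
    using assms(5) by (intro member_le_sum) auto
  finally have "ennreal 1 / of_nat m \<le> (\<integral>\<^sup>+ x. ennreal ((f x - g x)\<^sup>2) \<partial>uniform_points m z)"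
    using assms by (simp add: nn_integral_uniform_points divide_right_mono_ennreal)
  moreover assume "L2_close (uniform_points m z) (2 * eps) f g"
  ultimately have "ennreal 1 / of_nat m \<le> ennreal ((2 * eps)\<^sup>2)"
    unfolding L2_close_def by order
  then have "1 / real m \<le> 4 * eps\<^sup>2"
    using assms(1) by (simp add: ennreal_of_nat_eq_real_of_nat divide_ennreal power_mult_distrib
        flip: ennreal_1)
  then show False
    using assms(1,2) by (simp add: field_simps)
qed

lemma Kker_class_N_cov_ge_pow2:
  assumes "0 < m" "4 * real m * eps\<^sup>2 < 1"
  shows "ereal (2 ^ m) \<le> (SUP P\<in>borel_prob_measures. N_cov eps ((\<lambda>x z. Kker c (x - z)) ` {0..1}) P)"
proof -
  obtain z where "\<forall>S. \<exists>x\<in>{0..1}. \<forall>j<m.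
      if j \<in> S then 1 / 2 \<le> Kker c (x - z j) else Kker c (x - z j) \<le> - 1 / 2"
    using Kker_shatters by blast
  then obtain x where x: "\<And>S. x S \<in> {0..1}"
    and sign: "\<And>S j. j < m \<Longrightarrow>
      if j \<in> S then 1 / 2 \<le> Kker c (x S - z j) else Kker c (x S - z j) \<le> - 1 / 2"
    by metis
  define f where "f S = (\<lambda>v. Kker c (x S - v))" for S
  have f_meas: "f S \<in> borel_measurable borel" for S
    unfolding f_def Kker_def by measurable
  have "ereal (card (Pow {..<m})) \<le> N_cov eps ((\<lambda>x z. Kker c (x - z)) ` {0..1}) (uniform_points m z)"
  proof (rule N_cov_ge_card_of_separated[OF _ _ f_meas])
    show "sets (uniform_points m z) = sets borel"
      by (simp add: uniform_points_def)
    show "f ` Pow {..<m} \<subseteq> (\<lambda>x z. Kker c (x - z)) ` {0..1}"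
      using x by (auto simp: f_def)
    fix S T assume "S \<in> Pow {..<m}" "T \<in> Pow {..<m}" "S \<noteq> T"
    then obtain j where j: "j < m" "j \<in> S \<longleftrightarrow> j \<notin> T"
      by blast
    then have "1 \<le> \<bar>f S (z j) - f T (z j)\<bar>"
      using sign[of j S] sign[of j T] by (auto simp: f_def split: if_splits)
    then show "\<not> L2_close (uniform_points m z) (2 * eps) (f S) (f T)"
      using not_L2_close_uniform_points[OF assms f_meas f_meas j(1)] by blast
  qed
  also have "\<dots> \<le> (SUP P\<in>borel_prob_measures. N_cov eps ((\<lambda>x z. Kker c (x - z)) ` {0..1}) P)"
    using uniform_points_in_borel_prob_measures[OF assms(1)] by (rule SUP_upper)
  finally show ?thesis
    by (simp add: card_Pow)
qed

theorem mainTheorem7: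
  fixes c :: real
  defines "FA \<equiv> (\<lambda>x. \<lambda>z. Kker c (x - z)) ` {0..1}"
  shows "\<not> (\<exists>C>0. \<exists>b>0. \<forall>eps::real. 0 < eps \<and> eps < 1 \<longrightarrow>
            (SUP P\<in>borel_prob_measures. N_cov eps FA P) \<le> ereal (C * eps powr (- b)))"
proof
  assume "\<exists>C>0. \<exists>b>0. \<forall>eps::real. 0 < eps \<and> eps < 1 \<longrightarrow>
            (SUP P\<in>borel_prob_measures. N_cov eps FA P) \<le> ereal (C * eps powr (- b))"
  then obtain C b where "0 < b" and bound: "\<And>eps. 0 < eps \<Longrightarrow> eps < 1 \<Longrightarrow>
      (SUP P\<in>borel_prob_measures. N_cov eps FA P) \<le> ereal (C * eps powr (- b))"
    by blast
  have "\<forall>\<^sub>F m in sequentially. C * (3 * sqrt (real m)) powr b < 2 ^ m"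
    using \<open>0 < b\<close> by real_asymp
  then have "\<forall>\<^sub>F m in sequentially. 0 < m \<and> C * (3 * sqrt (real m)) powr b < 2 ^ m"
    by (intro eventually_conj eventually_gt_at_top)
  then obtain m :: nat where m: "0 < m" "C * (3 * sqrt (real m)) powr b < 2 ^ m"
    using eventually_happens'[OF sequentially_bot] by blast
  define y where "y = 3 * sqrt (real m)"
  have "3 \<le> y" "y\<^sup>2 = 9 * real m"
    using m(1) by (simp_all add: y_def power_mult_distrib)
  define eps where "eps = 1 / y"
  have eps: "0 < eps" "eps < 1" "4 * real m * eps\<^sup>2 < 1"
    using \<open>3 \<le> y\<close> \<open>y\<^sup>2 = 9 * real m\<close> by (simp_all add: eps_def power_divide)
  have "ereal (2 ^ m) \<le> (SUP P\<in>borel_prob_measures. N_cov eps FA P)"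
    unfolding FA_def by (rule Kker_class_N_cov_ge_pow2[OF m(1) eps(3)])
  also have "\<dots> \<le> ereal (C * eps powr (- b))"
    by (rule bound[OF eps(1,2)])
  also have "eps powr (- b) = y powr b"
    using \<open>3 \<le> y\<close> by (simp add: eps_def powr_minus_divide powr_divide)
  finally show False
    using m(2) by (simp add: y_def)
qed

end
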